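(* Let $\mathbb{F}$ be a feature space and let $\theta$ be a function that aggregates any finite nonempty collection of elements of $\mathbb{F}$ into a single element of $\mathbb{F}$. Let $\mathcal{H}$ be a hierarchy (rooted tree) of malware binaries in which every non-leaf node $E_j$ (an exemplar) has features $F_j\in\mathbb{F}$ given by applying $\theta$ to the features of its children. Let $E_i$ be an exemplar of $\mathcal{H}$ whose descendants at depth $d_r$, $\mathbb{C}^{d_r}_i$, are re-clustered: the nodes strictly between $E_i$ and $\mathbb{C}^{d_r}_i$ are discarded and replaced by a sub-hierarchy $\mathcal{H}'$ with root $E_i$ and leaves exactly $\mathbb{C}^{d_r}_i$ (of arbitrary depth), in which the re-clustering algorithm generates the features of every exemplar (including $E_i$) by applying $\theta$ to the features of its children. Let $F_i$ be the features of $E_i$ before re-clustering and $F_i'$ its features after re-clustering. If $\theta$ is a transitive feature function (on the hierarchy both before and after the re-clustering), then $F_i = F_i'$.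
   Context: For an exemplar $E_i$ of a hierarchy, $\mathbb{C}^n_i$ denotes the set of descendants of $E_i$ at depth $n$ below $E_i$ (so $\mathbb{C}^1_i$ is its set of children), and $F_j$ denotes the features of node $E_j$ (binaries at the leaves have given features in $\mathbb{F}$). A function $\theta$ is called transitive on a hierarchy $\mathcal{H}$ if for every exemplar $E_i$ and all depths $n,m$, $\theta(F_{1,n},\dots,F_{k,n})=\theta(F_{1,m},\dots,F_{j,m})$, where $E_{1,n},\dots,E_{k,n}$ are the elements of $\mathbb{C}^n_i$ and $E_{1,m},\dots,E_{j,m}$ are the elements of $\mathbb{C}^m_i$; i.e., applying $\theta$ to the features of an exemplar's descendants at any depth gives the same result. *)

theory Defs
  imports "HOL-Library.Multiset"
begin

datatype 'b htree = Bin 'b | Ex "'b htree list"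

fun feat :: "('f multiset \<Rightarrow> 'f) \<Rightarrow> ('b \<Rightarrow> 'f) \<Rightarrow> 'b htree \<Rightarrow> 'f" where
  "feat \<theta> fB (Bin b) = fB b"
| "feat \<theta> fB (Ex ts) = \<theta> (mset (map (feat \<theta> fB) ts))"

fun desc :: "nat \<Rightarrow> 'b htree \<Rightarrow> 'b htree list" where
  "desc 0 t = [t]"
| "desc (Suc n) (Bin b) = []"
| "desc (Suc n) (Ex ts) = concat (map (desc n) ts)"

text \<open>Positions in a hierarchy, given as paths of child indices.\<close>
fun valid_path :: "nat list \<Rightarrow> 'b htree \<Rightarrow> bool" where
  "valid_path [] t = True"
| "valid_path (k # p) (Bin b) = False"
| "valid_path (k # p) (Ex ts) = (k < length ts \<and> valid_path p (ts ! k))"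

fun subtree :: "nat list \<Rightarrow> 'b htree \<Rightarrow> 'b htree" where
  "subtree [] t = t"
| "subtree (k # p) (Bin b) = Bin b"
| "subtree (k # p) (Ex ts) = subtree p (ts ! k)"

fun replace_at :: "nat list \<Rightarrow> 'b htree \<Rightarrow> 'b htree \<Rightarrow> 'b htree" where
  "replace_at [] s t = s"
| "replace_at (k # p) s (Bin b) = Bin b"
| "replace_at (k # p) s (Ex ts) = Ex (ts[k := replace_at p s (ts ! k)])"

fun is_exemplar :: "'b htree \<Rightarrow> bool" where
  "is_exemplar (Bin b) = False"
| "is_exemplar (Ex ts) = True"

fun wf_hier :: "'b htree \<Rightarrow> bool" where
  "wf_hier (Bin b) = True"
| "wf_hier (Ex ts) = (ts \<noteq> [] \<and> (\<forall>t\<in>set ts. wf_hier t))"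

definition transitive_on :: "('f multiset \<Rightarrow> 'f) \<Rightarrow> ('b \<Rightarrow> 'f) \<Rightarrow> 'b htree \<Rightarrow> bool" where
  "transitive_on \<theta> fB H \<longleftrightarrow>
     (\<forall>p. valid_path p H \<longrightarrow> is_exemplar (subtree p H) \<longrightarrow>
        (\<forall>n m. 1 \<le> n \<longrightarrow> 1 \<le> m \<longrightarrow>
           desc n (subtree p H) \<noteq> [] \<longrightarrow> desc m (subtree p H) \<noteq> [] \<longrightarrow>
           \<theta> (mset (map (feat \<theta> fB) (desc n (subtree p H)))) =
           \<theta> (mset (map (feat \<theta> fB) (desc m (subtree p H))))))"

text \<open>Shape of the new sub-hierarchy H': a tree whose leaves are nodes of the old
  hierarchy (the re-clustered descendants C^{d_r}_i), inner nodes are new exemplars.\<close>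
datatype 'a skel = SLeaf 'a | SNode "'a skel list"

fun sleaves :: "'a skel \<Rightarrow> 'a list" where
  "sleaves (SLeaf a) = [a]"
| "sleaves (SNode ss) = concat (map sleaves ss)"

fun levelled :: "nat \<Rightarrow> 'a skel \<Rightarrow> bool" where
  "levelled 0 s = (case s of SLeaf _ \<Rightarrow> True | SNode _ \<Rightarrow> False)"
| "levelled (Suc n) (SLeaf _) = False"
| "levelled (Suc n) (SNode ss) = (ss \<noteq> [] \<and> (\<forall>s\<in>set ss. levelled n s))"

fun graft :: "'b htree skel \<Rightarrow> 'b htree" where
  "graft (SLeaf t) = t"
| "graft (SNode ss) = Ex (map graft ss)"

end

theory Submission
  imports Defs
begin

text \<open>An exemplar's features are \<open>\<theta>\<close> applied to its children, i.e. to its descendants at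
  depth 1, so transitivity lets us compute them from its descendants at any nonempty depth.
  Before re-clustering take depth \<open>d\<^sub>r\<close>; after re-clustering take depth \<open>k\<close>, where the
  descendants are exactly the leaves of the grafted skeleton. Both give \<open>\<theta>\<close> of the same
  multiset of features.\<close>

lemma subtree_replace_at: "valid_path p H \<Longrightarrow> subtree p (replace_at p s H) = s"
proof (induction p arbitrary: H)
  case (Cons a p)
  then show ?case by (cases H) auto
qed simp

lemma valid_path_replace_at: "valid_path p H \<Longrightarrow> valid_path p (replace_at p s H)"
proof (induction p arbitrary: H)
  case (Cons a p)
  then show ?case by (cases H) auto
qed simp

lemma wf_hier_subtree: "wf_hier H \<Longrightarrow> valid_path p H \<Longrightarrow> wf_hier (subtree p H)"
proof (induction p arbitrary: H)
  case (Cons a p)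
  then show ?case by (cases H) auto
qed simp

lemma concat_map_desc_0 [simp]: "concat (map (desc 0) ts) = ts"
  by (induction ts) auto

lemma desc_graft: "levelled n S \<Longrightarrow> desc n (graft S) = sleaves S"
proof (induction n S rule: levelled.induct)
  case (3 n ss)
  then have "map (desc n \<circ> graft) ss = map sleaves ss" by auto
  then show ?case by (simp del: map_map add: map_map[symmetric])
qed (auto split: skel.splits)

lemma sleaves_nonempty: "levelled n S \<Longrightarrow> sleaves S \<noteq> []"
  by (induction n S rule: levelled.induct) (auto split: skel.splits)

lemma feat_transitive_desc:
  assumes "transitive_on \<theta> fB H" "valid_path p H"
    and "subtree p H = Ex ts" "ts \<noteq> []"
    and "1 \<le> n" "desc n (subtree p H) \<noteq> []"
  shows "feat \<theta> fB (subtree p H) = \<theta> (mset (map (feat \<theta> fB) (desc n (subtree p H))))"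
proof -
  have "feat \<theta> fB (subtree p H) = \<theta> (mset (map (feat \<theta> fB) (desc 1 (subtree p H))))"
    using assms(3) by simp
  also have "\<dots> = \<theta> (mset (map (feat \<theta> fB) (desc n (subtree p H))))"
  proof -
    have "desc 1 (subtree p H) \<noteq> []" using assms(3,4) by simp
    then show ?thesis
      using assms unfolding transitive_on_def by (metis is_exemplar.simps(2) order_refl)
  qed
  finally show ?thesis .
qed

theorem theorem1:
  fixes \<theta> :: "'f multiset \<Rightarrow> 'f" and fB :: "'b \<Rightarrow> 'f"
    and H :: "'b htree" and p :: "nat list" and d\<^sub>r k :: nat
    and S :: "'b htree skel"
  assumes hier: "wf_hier H"
    and pos: "valid_path p H"
    and exemplar: "is_exemplar (subtree p H)"
    and dr: "1 \<le> d\<^sub>r"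
    and shape: "1 \<le> k" "levelled k S"
    and leaves: "mset (sleaves S) = mset (desc d\<^sub>r (subtree p H))"
    and trans_before: "transitive_on \<theta> fB H"
    and trans_after: "transitive_on \<theta> fB (replace_at p (graft S) H)"
  shows "feat \<theta> fB (subtree p H) = feat \<theta> fB (subtree p (replace_at p (graft S) H))"
proof -
  let ?H' = "replace_at p (graft S) H"
  obtain ts where ts: "subtree p H = Ex ts" "ts \<noteq> []"
    using exemplar wf_hier_subtree[OF hier pos] by (cases "subtree p H") auto
  obtain ss where ss: "S = SNode ss" "ss \<noteq> []"
    using shape by (cases k; cases S) auto
  have new: "subtree p ?H' = graft S"
    using subtree_replace_at[OF pos] .
  have desc_new: "desc k (subtree p ?H') = sleaves S"
    using desc_graft[OF shape(2)] new by simp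
  have "desc d\<^sub>r (subtree p H) \<noteq> []"
    using leaves sleaves_nonempty[OF shape(2)] by (metis mset_zero_iff)
  then have "feat \<theta> fB (subtree p H) = \<theta> (mset (map (feat \<theta> fB) (desc d\<^sub>r (subtree p H))))"
    using feat_transitive_desc[OF trans_before pos ts dr] by simp
  also have "\<dots> = \<theta> (mset (map (feat \<theta> fB) (desc k (subtree p ?H'))))"
    by (simp only: desc_new mset_map leaves)
  also have "\<dots> = feat \<theta> fB (subtree p ?H')"
    using feat_transitive_desc[OF trans_after valid_path_replace_at[OF pos], of "map graft ss" k]
      new ss shape desc_new sleaves_nonempty[OF shape(2)] by simp
  finally show ?thesis .
qed

end
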